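(* Let $p\ge1$, $m\in\mathbb{N}$, $a,b>0$, $\beta\in\mathbb{R}^p$, and let $\xi$ be a design on $\mathcal{X}$. Then the Poisson–Gamma information matrix $M(\xi;\beta)$ and the Poisson information matrix $M_{Po}(\xi;\beta)$ have the same rank.
   Context: Let $\mathcal{X}\subseteq\mathbb{R}^k$ be a design region and $f=(1,f_1,\ldots,f_{p-1})^T:\mathcal{X}\to\mathbb{R}^p$ a vector of regression functions whose first component is the constant 1. A design $\xi$ is a probability measure on $\mathcal{X}$ with finite support $x_1,\ldots,x_l$ and weights $w_1,\ldots,w_l\ge0$, $\sum_j w_j=1$. The Poisson information matrix is $M_{Po}(\xi;\beta)=\sum_{j=1}^l w_j\exp(f(x_j)^T\beta)f(x_j)f(x_j)^T$, and the Poisson–Gamma information matrix is $M(\xi;\beta)=\frac{a}{b}\Bigl(M_{Po}(\xi;\beta)-\frac{M_{Po}(\xi;\beta)e_1e_1^TM_{Po}(\xi;\beta)}{e_1^TM_{Po}(\xi;\beta)e_1+b/m}\Bigr)$, where $e_1$ is the first standard unit vector of $\mathbb{R}^p$. *)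

theory Defs
  imports "HOL-Analysis.Analysis"
begin

definition outer :: "real^'p \<Rightarrow> real^'p \<Rightarrow> real^'p^'p" where
  "outer u v = (\<chi> i j. u $ i * v $ j)"

definition M_Po :: "('k \<Rightarrow> real^'p) \<Rightarrow> nat \<Rightarrow> (nat \<Rightarrow> 'k) \<Rightarrow> (nat \<Rightarrow> real)
    \<Rightarrow> real^'p \<Rightarrow> real^'p^'p" where
  "M_Po f l x w \<beta> = (\<Sum>j<l. (w j * exp (f (x j) \<bullet> \<beta>)) *\<^sub>R outer (f (x j)) (f (x j)))"

definition M_PG :: "real \<Rightarrow> real \<Rightarrow> nat \<Rightarrow> 'p \<Rightarrow> ('k \<Rightarrow> real^'p) \<Rightarrow> nat \<Rightarrow> (nat \<Rightarrow> 'k)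
    \<Rightarrow> (nat \<Rightarrow> real) \<Rightarrow> real^'p \<Rightarrow> real^'p^'p" where
  "M_PG a b m i0 f l x w \<beta> =
    (let M = M_Po f l x w \<beta>; e1 = (axis i0 1 :: real^'p) in
     (a / b) *\<^sub>R (M - (1 / (e1 \<bullet> (M *v e1) + b / real m)) *\<^sub>R (M ** outer e1 e1 ** M)))"

end

theory Submission
  imports Defs
begin

text \<open>With c = e^T M e + q, the Poisson-Gamma matrix factors as
  M - (1/c) M e e^T M = M (I - (1/c) e e^T M), and the right factor is injective whenever q \<noteq> 0:
  from (I - (1/c) e e^T M) v = 0 we get v = (t/c) e with t = e^T M v, hence t = (t/c) e^T M e,
  i.e. t q = 0 (if c = 0, then 1/c = 0 in HOL and the factor is simply I). So the rank is preserved for every square matrix M.\<close>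

lemma outer_mult_vec: "outer u v *v x = (v \<bullet> x) *\<^sub>R (u::real^'n)"
  by (simp add: vec_eq_iff outer_def matrix_vector_mult_def inner_vec_def sum_distrib_left mult_ac)

lemma matrix_diff_ldistrib: "(A::real^'n^'m) ** (B - C) = A ** B - A ** C"
  by (simp add: matrix_matrix_mult_def vec_eq_iff sum_subtractf right_diff_distrib)

lemma rank_mult_right_injective:
  fixes M :: "real^'n^'m" and P :: "real^'n^'n"
  assumes "\<And>v. P *v v = 0 \<Longrightarrow> v = 0"
  shows "rank (M ** P) = rank M"
proof -
  have "invertible P"
    using assms matrix_left_invertible_ker invertible_left_inverse by blast
  then obtain Q where "P ** Q = mat 1"
    using invertible_right_inverse by blast
  then have "M = (M ** P) ** Q"
    by (metis matrix_mul_assoc matrix_mul_rid)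
  then have "rank M \<le> rank (M ** P)"
    by (metis rank_mul_le_left)
  then show ?thesis
    using rank_mul_le_left[of M P] by simp
qed

lemma rank_scaleR:
  fixes M :: "real^'n^'m"
  assumes "s \<noteq> 0"
  shows "rank (s *\<^sub>R M) = rank M"
proof -
  have "s *\<^sub>R M = M ** (s *\<^sub>R mat 1)"
    by (simp add: matrix_scalar_ac)
  moreover have "(s *\<^sub>R mat 1) *v v = 0 \<Longrightarrow> v = (0::real^'n)" for v
    using assms by (simp add: scaleR_matrix_vector_assoc[symmetric])
  ultimately show ?thesis
    using rank_mult_right_injective by metis
qed

lemma id_minus_outer_mult_injective:
  fixes M :: "real^'n^'n" and e v :: "real^'n"
  assumes q: "q \<noteq> 0"
    and c: "c = e \<bullet> (M *v e) + q"
    and Pv: "(mat 1 - (1 / c) *\<^sub>R (outer e e ** M)) *v v = 0"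
  shows "v = 0"
proof -
  define t where "t = e \<bullet> (M *v v)"
  have "(mat 1 - (1 / c) *\<^sub>R (outer e e ** M)) *v v = v - (t / c) *\<^sub>R e"
    unfolding t_def
    by (simp add: matrix_vector_mult_diff_rdistrib scaleR_matrix_vector_assoc[symmetric]
        matrix_vector_mul_assoc[symmetric] outer_mult_vec)
  then have v: "v = (t / c) *\<^sub>R e"
    using Pv by simp
  have "e \<bullet> (M *v v) = (t / c) * (e \<bullet> (M *v e))"
    by (subst v) (simp add: matrix_vector_mult_scaleR)
  then have "t = (t / c) * (e \<bullet> (M *v e))"
    unfolding t_def .
  then have "t = 0"
    using q c by (cases "c = 0") (auto simp: field_simps)
  then show "v = 0"
    using v by simp
qed

lemma rank_rank_one_downdate:
  fixes M :: "real^'n^'n" and e :: "real^'n"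
  assumes "q \<noteq> 0" and "s \<noteq> 0"
  defines "c \<equiv> e \<bullet> (M *v e) + q"
  shows "rank (s *\<^sub>R (M - (1 / c) *\<^sub>R (M ** outer e e ** M))) = rank M"
proof -
  have "M - (1 / c) *\<^sub>R (M ** outer e e ** M) = M ** (mat 1 - (1 / c) *\<^sub>R (outer e e ** M))"
    by (simp add: matrix_diff_ldistrib matrix_mul_assoc matrix_scalar_ac scalar_matrix_assoc)
  also have "rank \<dots> = rank M"
    using rank_mult_right_injective id_minus_outer_mult_injective assms by metis
  finally show ?thesis
    using rank_scaleR \<open>s \<noteq> 0\<close> by metis
qed

theorem lemma1:
  fixes X :: "(real^'k) set"
    and f :: "real^'k \<Rightarrow> real^'p"
    and i0 :: 'p
    and l m :: nat
    and x :: "nat \<Rightarrow> real^'k"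
    and w :: "nat \<Rightarrow> real"
    and a b :: real
    and \<beta> :: "real^'p"
  assumes f_first: "\<And>y. y \<in> X \<Longrightarrow> f y $ i0 = 1"
    and supp: "\<And>j. j < l \<Longrightarrow> x j \<in> X"
    and w_nonneg: "\<And>j. j < l \<Longrightarrow> w j \<ge> 0"
    and w_sum: "(\<Sum>j<l. w j) = 1"
    and m_pos: "m \<ge> 1"
    and a_pos: "a > 0"
    and b_pos: "b > 0"
  shows "rank (M_PG a b m i0 f l x w \<beta>) = rank (M_Po f l x w \<beta>)"
proof -
  have "b / real m \<noteq> 0" and "a / b \<noteq> 0"
    using m_pos a_pos b_pos by auto
  then show ?thesis
    unfolding M_PG_def Let_def by (rule rank_rank_one_downdate)
qed

end
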